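(* Let $\varrho:\mathbb{R}\to\mathbb{R}$ be Lipschitz continuous but not affine-linear, let $S=(N_0,\dots,N_{L-1},1)$ be a network architecture with $L\ge2$, $N_0=d$ and $N_1\ge3$, and let $\Omega\subset\mathbb{R}^d$ be bounded with nonempty interior. Then the realization map $\mathrm{R}_\varrho^\Omega:\mathcal{NN}(S)\to C(\Omega)$, $\Phi\mapsto\mathrm{R}_\varrho^\Omega(\Phi)$, considered as a map onto its range (with the subspace topology of the supremum norm), is not a quotient map.
   Context: A neural network with architecture $S=(N_0,\dots,N_L)$ is a family $\Phi=((A_\ell,b_\ell))_{\ell=1}^L$, $A_\ell\in\mathbb{R}^{N_\ell\times N_{\ell-1}}$, $b_\ell\in\mathbb{R}^{N_\ell}$; $\mathcal{NN}(S)$ is the finite-dimensional vector space of these with its norm topology. $\mathrm{R}_\varrho^\Omega(\Phi):\Omega\to\mathbb{R}^{N_L}$, $x\mapsto x_L$, where $x_0=x$, $x_\ell=\varrho(A_\ell x_{\ell-1}+b_\ell)$ for $1\le\ell\le L-1$ (componentwise), $x_L=A_Lx_{L-1}+b_L$. A surjective map $q:X\to Y$ between topological spaces is a quotient map if $M\subset Y$ is open iff $q^{-1}(M)$ is open in $X$. *)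

theory Defs
  imports "HOL-Analysis.Analysis"
begin

text \<open>Network parameters of all layers: weights W l i j (layer l, row i, column j)
  and biases B l i.  A network with architecture S = [N_0,...,N_L] is such a pair
  that vanishes outside the index ranges 1 \<le> l \<le> L, i < N_l, j < N_(l-1);
  this set is a finite-dimensional linear space, and the subspace topology of the
  product topology on it is its norm topology.\<close>
type_synonym params = "(nat \<Rightarrow> nat \<Rightarrow> nat \<Rightarrow> real) \<times> (nat \<Rightarrow> nat \<Rightarrow> real)"

definition NN :: "nat list \<Rightarrow> params set" where
  "NN S = {(W, B).
     (\<forall>l i j. (l = 0 \<or> length S \<le> l \<or> S ! l \<le> i \<or> S ! (l - 1) \<le> j) \<longrightarrow> W l i j = 0) \<and>
     (\<forall>l i. (l = 0 \<or> length S \<le> l \<or> S ! l \<le> i) \<longrightarrow> B l i = 0)}"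

text \<open>Points of R^d are represented as functions nat \<Rightarrow> real (coordinates j < d).
  layer_out gives x_l; the activation is applied for 1 \<le> l \<le> L-1, not in layer L.\<close>
fun layer_out :: "(real \<Rightarrow> real) \<Rightarrow> nat list \<Rightarrow> params \<Rightarrow> (nat \<Rightarrow> real) \<Rightarrow> nat \<Rightarrow> nat \<Rightarrow> real" where
  "layer_out \<rho> S \<Phi> x 0 = x"
| "layer_out \<rho> S \<Phi> x (Suc l) = (\<lambda>i. if i < S ! Suc l then
      (let z = (\<Sum>j<S ! l. fst \<Phi> (Suc l) i j * layer_out \<rho> S \<Phi> x l j) + snd \<Phi> (Suc l) i
       in if Suc l < length S - 1 then \<rho> z else z)
     else 0)"

text \<open>Realization on \<Omega> of a network with scalar output (N_L = 1); functions on \<Omega>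
  are represented by their extension by 0 outside \<Omega>.\<close>
definition realization :: "(real \<Rightarrow> real) \<Rightarrow> nat list \<Rightarrow> (nat \<Rightarrow> real) set \<Rightarrow> params \<Rightarrow> (nat \<Rightarrow> real) \<Rightarrow> real" where
  "realization \<rho> S \<Omega> \<Phi> = (\<lambda>x. if x \<in> \<Omega> then layer_out \<rho> S \<Phi> x (length S - 1) 0 else 0)"

definition sup_dist :: "'a set \<Rightarrow> ('a \<Rightarrow> real) \<Rightarrow> ('a \<Rightarrow> real) \<Rightarrow> real" where
  "sup_dist \<Omega> f g = (SUP x\<in>\<Omega>. \<bar>f x - g x\<bar>)"

definition unif_open :: "'a set \<Rightarrow> ('a \<Rightarrow> real) set \<Rightarrow> ('a \<Rightarrow> real) set \<Rightarrow> bool" where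
  "unif_open \<Omega> F M \<longleftrightarrow> M \<subseteq> F \<and> (\<forall>f\<in>M. \<exists>e>0. \<forall>g\<in>F. sup_dist \<Omega> f g < e \<longrightarrow> g \<in> M)"

lemma istopology_unif_open: "istopology (unif_open \<Omega> F)"
  unfolding istopology_def
proof (intro conjI allI impI)
  fix S T assume a: "unif_open \<Omega> F S" "unif_open \<Omega> F T"
  show "unif_open \<Omega> F (S \<inter> T)"
    unfolding unif_open_def
  proof (intro conjI ballI)
    show "S \<inter> T \<subseteq> F" using a unfolding unif_open_def by blast
  next
    fix f assume f: "f \<in> S \<inter> T"
    obtain e1 where e1: "e1 > 0" "\<forall>g\<in>F. sup_dist \<Omega> f g < e1 \<longrightarrow> g \<in> S"
      using a(1) f unfolding unif_open_def by blast
    obtain e2 where e2: "e2 > 0" "\<forall>g\<in>F. sup_dist \<Omega> f g < e2 \<longrightarrow> g \<in> T"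
      using a(2) f unfolding unif_open_def by blast
    show "\<exists>e>0. \<forall>g\<in>F. sup_dist \<Omega> f g < e \<longrightarrow> g \<in> S \<inter> T"
      using e1 e2 by (intro exI[of _ "min e1 e2"]) auto
  qed
next
  fix K assume K: "\<forall>S\<in>K. unif_open \<Omega> F S"
  show "unif_open \<Omega> F (\<Union>K)"
    unfolding unif_open_def
  proof (intro conjI ballI)
    show "\<Union>K \<subseteq> F" using K unfolding unif_open_def by blast
  next
    fix f assume "f \<in> \<Union>K"
    then obtain S where S: "S \<in> K" "f \<in> S" by blast
    then obtain e where "e > 0" "\<forall>g\<in>F. sup_dist \<Omega> f g < e \<longrightarrow> g \<in> S"
      using K unfolding unif_open_def by blast
    then show "\<exists>e>0. \<forall>g\<in>F. sup_dist \<Omega> f g < e \<longrightarrow> g \<in> \<Union>K"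
      using S by blast
  qed
qed

definition unif_top :: "'a set \<Rightarrow> ('a \<Rightarrow> real) set \<Rightarrow> ('a \<Rightarrow> real) topology" where
  "unif_top \<Omega> F = topology (unif_open \<Omega> F)"

lemma openin_unif_top: "openin (unif_top \<Omega> F) = unif_open \<Omega> F"
  unfolding unif_top_def by (rule topology_inverse'[OF istopology_unif_open])

definition eucl_dist :: "nat \<Rightarrow> (nat \<Rightarrow> real) \<Rightarrow> (nat \<Rightarrow> real) \<Rightarrow> real" where
  "eucl_dist d x y = sqrt (\<Sum>j<d. (x j - y j)^2)"

definition Rd :: "nat \<Rightarrow> (nat \<Rightarrow> real) set" where
  "Rd d = {x. \<forall>j\<ge>d. x j = 0}"

end

theory Submission
  imports Defs
begin

text \<open>The realization map is continuous in the parameters, and near any parameter all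
  realizations are Lipschitz with a common constant, since the weights stay bounded there.
  On the other hand, \<open>\<rho>\<close> is Lipschitz but not affine, so its increments \<open>\<rho> s - \<rho> (s - h)\<close>
  are not constant in \<open>s\<close>.  A network that evaluates \<open>\<rho>\<close> at two points \<open>h\<close> apart along a
  steep ridge in the first coordinate and propagates their difference through one-neuron
  layers therefore yields realizations \<open>g\<^sub>n\<close> that are uniformly \<open>1/(n+1)\<close>-close to \<open>0\<close> but
  have slope larger than \<open>n\<close>.  The set of realizations other than the \<open>g\<^sub>n\<close> then contains \<open>0\<close>
  without being a uniform neighbourhood of it, whereas its preimage is open: close to a fixed
  parameter only finitely many \<open>g\<^sub>n\<close> are attainable, and avoiding a single function is an
  open condition because point evaluations are continuous.\<close>

section \<open>Non-affine Lipschitz functions\<close>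

text \<open>\<open>Modules.additive\<close> is the Cauchy functional equation; the unqualified \<open>additive\<close>
  of \<open>HOL-Analysis\<close> refers to set functions.\<close>

lemma additive_lipschitz_imp_linear:
  fixes f :: "real \<Rightarrow> real"
  assumes "Modules.additive f" and lip: "K-lipschitz_on UNIV f"
  shows "f x = f 1 * x"
proof -
  \<comment> \<open>\<open>g\<close> is additive and vanishes on the integers, hence bounded; but \<open>g (n * x) = n * g x\<close>.\<close>
  interpret f: Modules.additive f by fact
  define g where "g y = f y - f 1 * y" for y
  interpret g: Modules.additive g
    by unfold_locales (simp add: g_def f.add algebra_simps)
  have g_nat: "g (real n * y) = real n * g y" for n y
    by (induction n) (simp_all add: g.zero g.add distrib_right)
  have g_int: "g (of_int k) = 0" for k
    using g_nat[of _ 1] g.minus by (cases k rule: int_cases2) (simp_all add: g_def)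
  have g_small: "\<bar>g t\<bar> \<le> (K + \<bar>f 1\<bar>) * \<bar>t\<bar>" for t
  proof -
    have "\<bar>f t\<bar> \<le> K * \<bar>t\<bar>"
      using lipschitz_onD[OF lip, of t 0] by (simp add: f.zero dist_real_def)
    then show ?thesis
      unfolding g_def by (simp add: abs_mult distrib_right abs_triangle_ineq4 order_trans[OF abs_triangle_ineq4])
  qed
  have g_bounded: "\<bar>g y\<bar> \<le> K + \<bar>f 1\<bar>" for y
  proof -
    have "g y = g (frac y)"
      using g.add[of "frac y" "of_int \<lfloor>y\<rfloor>"] g_int by (simp add: frac_def)
    also have "\<bar>\<dots>\<bar> \<le> (K + \<bar>f 1\<bar>) * \<bar>frac y\<bar>" by (rule g_small)
    also have "\<dots> \<le> K + \<bar>f 1\<bar>"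
      using lipschitz_on_nonneg[OF lip] frac_lt_1[of y] frac_ge_0[of y]
      by (intro mult_left_le) auto
    finally show ?thesis .
  qed
  have "g x = 0"
  proof (rule ccontr)
    assume "g x \<noteq> 0"
    then obtain n :: nat where "K + \<bar>f 1\<bar> < real n * \<bar>g x\<bar>"
      using reals_Archimedean3[of "\<bar>g x\<bar>"] by auto
    then show False
      using g_bounded[of "real n * x"] by (simp add: g_nat abs_mult)
  qed
  then show ?thesis by (simp add: g_def)
qed

lemma lipschitz_non_affine_increments:
  fixes \<rho> :: "real \<Rightarrow> real"
  assumes lip: "K-lipschitz_on UNIV \<rho>" and not_affine: "\<not> (\<exists>a b. \<forall>x. \<rho> x = a * x + b)"
  obtains h s s' where "\<rho> s - \<rho> (s - h) \<noteq> \<rho> s' - \<rho> (s' - h)"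
proof (rule ccontr)
  assume "\<not> thesis"
  then have increments: "\<rho> s - \<rho> (s - h) = \<rho> s' - \<rho> (s' - h)" for h s s'
    using that by blast
  define f where "f y = \<rho> y - \<rho> 0" for y
  have "Modules.additive f"
  proof
    show "f (a + b) = f a + f b" for a b
      using increments[of "a + b" a a] by (simp add: f_def)
  qed
  moreover have "K-lipschitz_on UNIV f"
    using lip unfolding f_def lipschitz_on_def by (simp add: dist_real_def)
  ultimately have "\<rho> x = f 1 * x + \<rho> 0" for x
    using additive_lipschitz_imp_linear[of f K x] by (simp add: f_def algebra_simps)
  with not_affine show False by blast
qed

lemma affine_through_two_points:
  fixes u u' r r' :: real
  assumes "u \<noteq> u'"
  obtains \<alpha> \<beta> where "\<alpha> * u + \<beta> = r" and "\<alpha> * u' + \<beta> = r'"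
proof -
  define \<alpha> where "\<alpha> = (r' - r) / (u' - u)"
  have "\<alpha> * (u' - u) = r' - r"
    using assms by (simp add: \<alpha>_def)
  then have "\<alpha> * u' + (r - \<alpha> * u) = r'"
    by (simp add: algebra_simps)
  with that[of \<alpha> "r - \<alpha> * u"] show thesis
    by simp
qed

section \<open>Quotient maps onto sets of functions with the uniform topology\<close>

definition bounded_slope :: "'a set \<Rightarrow> ('a \<Rightarrow> 'a \<Rightarrow> real) \<Rightarrow> real \<Rightarrow> ('a \<Rightarrow> real) \<Rightarrow> bool" where
  "bounded_slope \<Omega> \<delta> M f \<longleftrightarrow> (\<forall>x\<in>\<Omega>. \<forall>y\<in>\<Omega>. \<bar>f x - f y\<bar> \<le> M * \<delta> x y)"

lemma bounded_slope_mono: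
  assumes "bounded_slope \<Omega> \<delta> M f" and "M \<le> M'" and "\<And>x y. 0 \<le> \<delta> x y"
  shows "bounded_slope \<Omega> \<delta> M' f"
  using assms unfolding bounded_slope_def by (meson mult_right_mono order_trans)

lemma topspace_unif_top: "topspace (unif_top \<Omega> F) = F"
proof
  show "topspace (unif_top \<Omega> F) \<subseteq> F"
    unfolding topspace_def openin_unif_top unif_open_def by blast
  have "unif_open \<Omega> F F"
    unfolding unif_open_def by (auto intro: exI[of _ 1])
  then show "F \<subseteq> topspace (unif_top \<Omega> F)"
    unfolding topspace_def openin_unif_top by blast
qed

lemma sup_dist_le:
  assumes "\<Omega> \<noteq> {}" and "\<And>x. x \<in> \<Omega> \<Longrightarrow> \<bar>f x - g x\<bar> \<le> e"
  shows "sup_dist \<Omega> f g \<le> e"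
  unfolding sup_dist_def using assms by (rule cSUP_least)

lemma bounded_slope_neq_steep:
  assumes "bounded_slope \<Omega> \<delta> M f" and "\<And>x y. 0 \<le> \<delta> x y"
    and "\<not> bounded_slope \<Omega> \<delta> M' g" and "M \<le> M'"
  shows "f \<noteq> g"
  using assms bounded_slope_mono by blast

lemma not_openin_unif_top:
  assumes "f \<in> U" and "\<And>e. 0 < e \<Longrightarrow> \<exists>g\<in>F - U. sup_dist \<Omega> f g < e"
  shows "\<not> openin (unif_top \<Omega> F) U"
proof
  assume "openin (unif_top \<Omega> F) U"
  then obtain e where "0 < e" and ball: "\<forall>g\<in>F. sup_dist \<Omega> f g < e \<longrightarrow> g \<in> U"
    using \<open>f \<in> U\<close> unfolding openin_unif_top unif_open_def by blast
  with assms(2)[OF \<open>0 < e\<close>] show False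
    by blast
qed

lemma openin_avoiding_steep_functions:
  fixes R :: "'p::topological_space \<Rightarrow> 'a \<Rightarrow> real"
  assumes cont: "\<And>x. continuous_on P (\<lambda>\<Phi>. R \<Phi> x)"
    and locally_bounded: "\<And>\<Phi>. \<Phi> \<in> P \<Longrightarrow> \<exists>T M. open T \<and> \<Phi> \<in> T \<and> (\<forall>\<Psi>\<in>P \<inter> T. bounded_slope \<Omega> \<delta> M (R \<Psi>))"
    and \<delta>: "\<And>x y. 0 \<le> \<delta> x y"
    and steep: "\<And>n. \<not> bounded_slope \<Omega> \<delta> (real n) (g n)"
  shows "openin (top_of_set P) {\<Phi> \<in> P. R \<Phi> \<notin> g ` {N..}}"
  unfolding openin_subopen[of _ "{\<Phi> \<in> P. R \<Phi> \<notin> g ` {N..}}"]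
proof
  fix \<Phi>\<^sub>1 assume "\<Phi>\<^sub>1 \<in> {\<Phi> \<in> P. R \<Phi> \<notin> g ` {N..}}"
  then have \<Phi>\<^sub>1: "\<Phi>\<^sub>1 \<in> P" "R \<Phi>\<^sub>1 \<notin> g ` {N..}"
    by auto
  obtain T M where T: "open T" "\<Phi>\<^sub>1 \<in> T" and slope: "\<forall>\<Psi>\<in>P \<inter> T. bounded_slope \<Omega> \<delta> M (R \<Psi>)"
    using locally_bounded[OF \<open>\<Phi>\<^sub>1 \<in> P\<close>] by blast
  obtain N' :: nat where "M \<le> real N'"
    using real_arch_simple by blast
  have far: "R \<Psi> \<noteq> g n" if "\<Psi> \<in> P \<inter> T" and "N' \<le> n" for \<Psi> n
    using slope that \<open>M \<le> real N'\<close> by (intro bounded_slope_neq_steep[OF _ \<delta> steep]) auto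
  have "\<exists>x. R \<Phi>\<^sub>1 x \<noteq> g n x" if "n \<in> {N..<N'}" for n
    using \<Phi>\<^sub>1 that by auto
  then obtain x where x: "\<And>n. n \<in> {N..<N'} \<Longrightarrow> R \<Phi>\<^sub>1 (x n) \<noteq> g n (x n)"
    by metis
  define V where "V = (P \<inter> T) \<inter> \<Inter> ((\<lambda>n. P \<inter> (\<lambda>\<Phi>. R \<Phi> (x n)) -` (- {g n (x n)})) ` {N..<N'})"
  show "\<exists>V. openin (top_of_set P) V \<and> \<Phi>\<^sub>1 \<in> V \<and> V \<subseteq> {\<Phi> \<in> P. R \<Phi> \<notin> g ` {N..}}"
  proof (intro exI conjI)
    show "openin (top_of_set P) V"
      unfolding V_def
      by (intro openin_Int_Inter openin_open_Int T)
        (auto intro: continuous_openin_preimage_gen[OF cont])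
    show "\<Phi>\<^sub>1 \<in> V"
      using \<Phi>\<^sub>1 T x by (auto simp: V_def)
    show "V \<subseteq> {\<Phi> \<in> P. R \<Phi> \<notin> g ` {N..}}"
    proof safe
      fix \<Phi> n assume "\<Phi> \<in> V" "N \<le> n" "R \<Phi> = g n"
      then show False
        using far[of \<Phi> n] by (cases "N' \<le> n") (auto simp: V_def)
    qed (auto simp: V_def)
  qed
qed

lemma not_quotient_map_if_steep_approximation:
  fixes R :: "'p::topological_space \<Rightarrow> 'a \<Rightarrow> real"
  assumes cont: "\<And>x. continuous_on P (\<lambda>\<Phi>. R \<Phi> x)"
    and locally_bounded: "\<And>\<Phi>. \<Phi> \<in> P \<Longrightarrow> \<exists>T M. open T \<and> \<Phi> \<in> T \<and> (\<forall>\<Psi>\<in>P \<inter> T. bounded_slope \<Omega> \<delta> M (R \<Psi>))"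
    and \<delta>: "\<And>x y. 0 \<le> \<delta> x y"
    and "\<Phi>\<^sub>0 \<in> P"
    and approx: "\<And>e M. 0 < e \<Longrightarrow> \<exists>\<Psi>\<in>P. (\<forall>x\<in>\<Omega>. \<bar>R \<Psi> x - R \<Phi>\<^sub>0 x\<bar> < e) \<and> \<not> bounded_slope \<Omega> \<delta> M (R \<Psi>)"
  shows "\<not> quotient_map (top_of_set P) (unif_top \<Omega> (R ` P)) R"
proof
  assume quotient: "quotient_map (top_of_set P) (unif_top \<Omega> (R ` P)) R"
  have "\<forall>n. \<exists>\<Psi>\<in>P. (\<forall>x\<in>\<Omega>. \<bar>R \<Psi> x - R \<Phi>\<^sub>0 x\<bar> < 1 / Suc n) \<and> \<not> bounded_slope \<Omega> \<delta> (real n) (R \<Psi>)"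
    using approx by simp
  then obtain \<Psi> where \<Psi>: "\<And>n. \<Psi> n \<in> P"
    and close: "\<And>n x. x \<in> \<Omega> \<Longrightarrow> \<bar>R (\<Psi> n) x - R \<Phi>\<^sub>0 x\<bar> < 1 / Suc n"
    and steep: "\<And>n. \<not> bounded_slope \<Omega> \<delta> (real n) (R (\<Psi> n))"
    by metis
  define g where "g n = R (\<Psi> n)" for n
  have g_steep: "\<not> bounded_slope \<Omega> \<delta> (real n) (g n)" for n
    using steep by (simp add: g_def)
  obtain T M where "\<Phi>\<^sub>0 \<in> T" and slope: "\<forall>\<Psi>\<in>P \<inter> T. bounded_slope \<Omega> \<delta> M (R \<Psi>)"
    using locally_bounded[OF \<open>\<Phi>\<^sub>0 \<in> P\<close>] by blast
  obtain N :: nat where "M \<le> real N"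
    using real_arch_simple by blast
  define U where "U = R ` P - g ` {N..}"
  have "R \<Phi>\<^sub>0 \<noteq> g n" if "N \<le> n" for n
    using slope \<open>\<Phi>\<^sub>0 \<in> P\<close> \<open>\<Phi>\<^sub>0 \<in> T\<close> \<open>M \<le> real N\<close> that
    by (intro bounded_slope_neq_steep[OF _ \<delta> g_steep]) auto
  then have "R \<Phi>\<^sub>0 \<in> U"
    using \<open>\<Phi>\<^sub>0 \<in> P\<close> by (auto simp: U_def)
  have "{\<Phi> \<in> P. R \<Phi> \<in> U} = {\<Phi> \<in> P. R \<Phi> \<notin> g ` {N..}}"
    by (auto simp: U_def)
  moreover have "openin (top_of_set P) {\<Phi> \<in> P. R \<Phi> \<notin> g ` {N..}}"
    by (rule openin_avoiding_steep_functions[OF cont _ \<delta> g_steep]) (rule locally_bounded)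
  ultimately have "openin (unif_top \<Omega> (R ` P)) U"
    using quotient unfolding quotient_map_def topspace_unif_top by (auto simp: U_def)
  moreover have "\<not> openin (unif_top \<Omega> (R ` P)) U"
  proof (rule not_openin_unif_top[OF \<open>R \<Phi>\<^sub>0 \<in> U\<close>])
    fix e :: real assume "0 < e"
    then obtain k :: nat where k: "inverse (real (Suc k)) < e"
      using reals_Archimedean by blast
    have "\<Omega> \<noteq> {}"
      using steep[of 0] unfolding bounded_slope_def by blast
    have "sup_dist \<Omega> (R \<Phi>\<^sub>0) (g (N + k)) \<le> 1 / Suc (N + k)"
      using close[of _ "N + k"] by (intro sup_dist_le[OF \<open>\<Omega> \<noteq> {}\<close>]) (simp add: g_def abs_minus_commute less_imp_le)
    also have "\<dots> \<le> inverse (real (Suc k))"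
      by (simp add: inverse_eq_divide frac_le)
    finally show "\<exists>f\<in>R ` P - U. sup_dist \<Omega> (R \<Phi>\<^sub>0) f < e"
      using k \<Psi> by (intro bexI[of _ "g (N + k)"]) (auto simp: U_def g_def)
  qed
  ultimately show False
    by blast
qed

section \<open>Continuity and local Lipschitz bounds of the realization\<close>

lemma continuous_on_weight: "continuous_on UNIV (\<lambda>\<Phi>::params. fst \<Phi> l i j)"
  using continuous_on_fst[OF continuous_on_id]
  by (rule continuous_on_product_then_coordinatewise[THEN continuous_on_product_then_coordinatewise,
        THEN continuous_on_product_then_coordinatewise])

lemma continuous_on_bias: "continuous_on UNIV (\<lambda>\<Phi>::params. snd \<Phi> l i)"
  using continuous_on_snd[OF continuous_on_id]
  by (rule continuous_on_product_then_coordinatewise[THEN continuous_on_product_then_coordinatewise])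

lemma layer_out_continuous_on_params:
  assumes "continuous_on UNIV \<rho>"
  shows "continuous_on UNIV (\<lambda>\<Phi>. layer_out \<rho> S \<Phi> x l i)"
proof (induction l arbitrary: i)
  case 0
  show ?case by simp
next
  case (Suc l)
  have z: "continuous_on UNIV (\<lambda>\<Phi>. (\<Sum>j<S ! l. fst \<Phi> (Suc l) i j * layer_out \<rho> S \<Phi> x l j) + snd \<Phi> (Suc l) i)"
    by (intro continuous_intros continuous_on_weight continuous_on_bias Suc.IH)
  show ?case
  proof (cases "i < S ! Suc l")
    case True
    have "continuous_on UNIV (\<lambda>\<Phi>. \<rho> ((\<Sum>j<S ! l. fst \<Phi> (Suc l) i j * layer_out \<rho> S \<Phi> x l j) + snd \<Phi> (Suc l) i))"
      using continuous_on_compose2[OF assms z] by simp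
    with z show ?thesis
      by (cases "Suc l < length S - 1") (simp_all only: layer_out.simps Let_def if_True if_False True)
  next
    case False
    then show ?thesis by (simp only: layer_out.simps if_False continuous_on_const)
  qed
qed

lemma realization_eq_layer_out:
  "x \<in> \<Omega> \<Longrightarrow> realization \<rho> S \<Omega> \<Phi> x = layer_out \<rho> S \<Phi> x (length S - 1) 0"
  by (simp add: realization_def)

lemma realization_continuous_on_params:
  assumes "continuous_on UNIV \<rho>"
  shows "continuous_on P (\<lambda>\<Phi>. realization \<rho> S \<Omega> \<Phi> x)"
proof (cases "x \<in> \<Omega>")
  case True
  then show ?thesis
    using continuous_on_subset[OF layer_out_continuous_on_params[OF assms] subset_UNIV]
    by (simp add: realization_def)
next
  case False
  then show ?thesis by (simp add: realization_def)
qed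

lemma coordinate_le_eucl_dist: "j < d \<Longrightarrow> \<bar>x j - y j\<bar> \<le> eucl_dist d x y"
  unfolding eucl_dist_def
  by (rule real_le_rsqrt) (auto intro: member_le_sum simp: power2_abs)

lemma eucl_dist_nonneg: "0 \<le> eucl_dist d x y"
  unfolding eucl_dist_def by (simp add: sum_nonneg)

lemma eucl_dist_commute: "eucl_dist d x y = eucl_dist d y x"
  unfolding eucl_dist_def by (simp add: power2_commute)

lemma eucl_dist_update_0:
  assumes "0 < d"
  shows "eucl_dist d x (x(0 := x 0 + t)) = \<bar>t\<bar>"
proof -
  have "(\<Sum>j<d. (x j - (x(0 := x 0 + t)) j)\<^sup>2) = (\<Sum>j<d. if j = 0 then t\<^sup>2 else 0)"
    by (rule sum.cong) auto
  also have "\<dots> = t\<^sup>2" using assms by simp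
  finally show ?thesis unfolding eucl_dist_def by simp
qed

lemma layer_out_slope_bound:
  assumes lip: "K-lipschitz_on UNIV \<rho>" and weights: "\<And>l i j. \<bar>fst \<Phi> l i j\<bar> \<le> C"
    and N0: "S ! 0 = d" and "i < S ! l"
  shows "\<bar>layer_out \<rho> S \<Phi> x l i - layer_out \<rho> S \<Phi> y l i\<bar>
           \<le> (\<Prod>k<l. max K 1 * real (S ! k) * C) * eucl_dist d x y"
  using \<open>i < S ! l\<close>
proof (induction l arbitrary: i)
  case 0
  then show ?case using coordinate_le_eucl_dist N0 by simp
next
  case (Suc l)
  define P where "P = (\<Prod>k<l. max K 1 * real (S ! k) * C)"
  define z where "z v = (\<Sum>j<S ! l. fst \<Phi> (Suc l) i j * layer_out \<rho> S \<Phi> v l j) + snd \<Phi> (Suc l) i" for v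
  have C: "0 \<le> C" using weights[of 0 0 0] by linarith
  have "\<bar>z x - z y\<bar> = \<bar>\<Sum>j<S ! l. fst \<Phi> (Suc l) i j * (layer_out \<rho> S \<Phi> x l j - layer_out \<rho> S \<Phi> y l j)\<bar>"
    unfolding z_def by (simp add: sum_subtractf algebra_simps)
  also have "\<dots> \<le> (\<Sum>j<S ! l. C * (P * eucl_dist d x y))"
    unfolding P_def using Suc.IH weights C
    by (intro order_trans[OF sum_abs] sum_mono) (auto simp: abs_mult intro: mult_mono)
  also have "\<dots> = real (S ! l) * C * P * eucl_dist d x y" by simp
  finally have z_bound: "\<bar>z x - z y\<bar> \<le> real (S ! l) * C * P * eucl_dist d x y" .
  \<comment> \<open>\<open>max K 1\<close> also bounds the slope of the identity, used in the output layer.\<close>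
  have lip1: "(max K 1)-lipschitz_on UNIV \<rho>"
    using lip by (rule lipschitz_on_le) auto
  have "\<bar>\<rho> (z x) - \<rho> (z y)\<bar> \<le> max K 1 * \<bar>z x - z y\<bar>"
    using lipschitz_onD[OF lip1 UNIV_I UNIV_I, of "z x" "z y"] by (simp add: dist_real_def)
  moreover have "\<bar>z x - z y\<bar> \<le> max K 1 * \<bar>z x - z y\<bar>"
    by (simp add: mult_le_cancel_right1)
  ultimately have "\<bar>layer_out \<rho> S \<Phi> x (Suc l) i - layer_out \<rho> S \<Phi> y (Suc l) i\<bar> \<le> max K 1 * \<bar>z x - z y\<bar>"
    using Suc.prems by (simp add: z_def Let_def)
  also have "\<dots> \<le> max K 1 * (real (S ! l) * C * P * eucl_dist d x y)"
    using z_bound by (intro mult_left_mono) auto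
  finally show ?case by (simp add: P_def algebra_simps)
qed

lemma NN_weights_locally_bounded:
  obtains T C where "open T" and "\<Phi>\<^sub>0 \<in> T" and "\<And>\<Phi> l i j. \<Phi> \<in> NN S \<Longrightarrow> \<Phi> \<in> T \<Longrightarrow> \<bar>fst \<Phi> l i j\<bar> \<le> C"
proof -
  define I where "I = (SIGMA l:{..<length S}. {..<S ! l} \<times> {..<S ! (l - 1)})"
  define T where "T = (\<Inter>(l, i, j)\<in>I. {\<Phi>::params. \<bar>fst \<Phi> l i j - fst \<Phi>\<^sub>0 l i j\<bar> < 1})"
  define C where "C = 1 + (\<Sum>(l, i, j)\<in>I. \<bar>fst \<Phi>\<^sub>0 l i j\<bar>)"
  have "finite I"
    unfolding I_def by auto
  have "open T"
    unfolding T_def using \<open>finite I\<close>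
    by (intro open_INT) (auto intro!: open_Collect_less continuous_intros continuous_on_weight)
  moreover have "\<Phi>\<^sub>0 \<in> T"
    by (auto simp: T_def)
  moreover have "\<bar>fst \<Phi> l i j\<bar> \<le> C" if "\<Phi> \<in> NN S" and "\<Phi> \<in> T" for \<Phi> l i j
  proof (cases "(l, i, j) \<in> I")
    case True
    then have "\<bar>fst \<Phi> l i j - fst \<Phi>\<^sub>0 l i j\<bar> < 1"
      using that(2) by (auto simp: T_def)
    moreover have "\<bar>fst \<Phi>\<^sub>0 l i j\<bar> \<le> (\<Sum>(l, i, j)\<in>I. \<bar>fst \<Phi>\<^sub>0 l i j\<bar>)"
      using member_le_sum[OF True, of "\<lambda>(l, i, j). \<bar>fst \<Phi>\<^sub>0 l i j\<bar>"] \<open>finite I\<close> by auto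
    ultimately show ?thesis
      unfolding C_def by linarith
  next
    case False
    then have "fst \<Phi> l i j = 0"
      using that(1) by (auto simp: I_def NN_def)
    moreover have "0 \<le> C"
      unfolding C_def by (auto intro!: add_nonneg_nonneg sum_nonneg)
    ultimately show ?thesis by simp
  qed
  ultimately show ?thesis
    using that by blast
qed

lemma realization_locally_bounded_slope:
  assumes lip: "K-lipschitz_on UNIV \<rho>" and N0: "S ! 0 = d" and out_pos: "0 < S ! (length S - 1)"
  shows "\<exists>T M. open T \<and> \<Phi>\<^sub>0 \<in> T \<and> (\<forall>\<Phi>\<in>NN S \<inter> T. bounded_slope \<Omega> (eucl_dist d) M (realization \<rho> S \<Omega> \<Phi>))"
proof -
  obtain T C where "open T" "\<Phi>\<^sub>0 \<in> T" and C: "\<And>\<Phi> l i j. \<Phi> \<in> NN S \<Longrightarrow> \<Phi> \<in> T \<Longrightarrow> \<bar>fst \<Phi> l i j\<bar> \<le> C"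
    by (rule NN_weights_locally_bounded[of \<Phi>\<^sub>0 S]) (rule that)
  let ?M = "\<Prod>k<length S - 1. max K 1 * real (S ! k) * C"
  have "bounded_slope \<Omega> (eucl_dist d) ?M (realization \<rho> S \<Omega> \<Phi>)" if "\<Phi> \<in> NN S \<inter> T" for \<Phi>
    unfolding bounded_slope_def
    using layer_out_slope_bound[OF lip C N0 out_pos] that by (simp add: realization_eq_layer_out)
  with \<open>open T\<close> \<open>\<Phi>\<^sub>0 \<in> T\<close> show ?thesis
    by blast
qed

lemma zero_params_in_NN: "(\<lambda>_ _ _. 0, \<lambda>_ _. 0) \<in> NN S"
  by (simp add: NN_def)

lemma realization_zero_params:
  assumes "0 < length S - 1"
  shows "realization \<rho> S \<Omega> (\<lambda>_ _ _. 0, \<lambda>_ _. 0) = (\<lambda>_. 0)"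
proof -
  obtain k where "length S - 1 = Suc k"
    using assms by (cases "length S - 1") auto
  then show ?thesis
    by (simp add: realization_def fun_eq_iff Let_def)
qed

section \<open>Small realizations with large slope\<close>

lemma sum_lessThan_supported_01:
  fixes w v :: "nat \<Rightarrow> real"
  assumes "\<And>j. 2 \<le> j \<Longrightarrow> w j = 0" and "0 < n" and "n = 1 \<Longrightarrow> w 1 = 0"
  shows "(\<Sum>j<n. w j * v j) = w 0 * v 0 + w 1 * v 1"
proof (cases "n = 1")
  case True
  then show ?thesis using assms(3) by simp
next
  case False
  then have "{0, 1} \<subseteq> {..<n}" using \<open>0 < n\<close> by auto
  then have "(\<Sum>j<n. w j * v j) = (\<Sum>j\<in>{0, 1}. w j * v j)"
    using assms(1) by (intro sum.mono_neutral_right) auto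
  then show ?thesis by simp
qed

text \<open>Only neurons 0 and 1 of layer 1 and neuron 0 of later layers are used: layer 1 computes
  \<open>\<rho> (m * x 0 + \<beta>)\<close> and \<open>\<rho> (m * x 0 + \<beta> - h)\<close>, and layer \<open>l \<ge> 2\<close> applies the affine map
  \<open>t \<mapsto> a (l - 1) * t + b (l - 1)\<close> to the value of layer \<open>l - 1\<close>, which for \<open>l = 2\<close> is the
  difference of the two.\<close>

definition thin_net :: "nat \<Rightarrow> real \<Rightarrow> real \<Rightarrow> real \<Rightarrow> (nat \<Rightarrow> real) \<Rightarrow> (nat \<Rightarrow> real) \<Rightarrow> params" where
  "thin_net L m \<beta> h a b =
     ((\<lambda>l i j. if l = 1 \<and> i \<le> 1 then (if j = 0 then m else 0)
              else if 2 \<le> l \<and> l \<le> L \<and> i = 0 then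
                (if j = 0 then a (l - 1) else if j = 1 then (if l = 2 then - a 1 else 0) else 0)
              else 0),
      (\<lambda>l i. if l = 1 \<and> i \<le> 1 then \<beta> - real i * h
             else if 2 \<le> l \<and> l \<le> L \<and> i = 0 then b (l - 1)
             else 0))"

fun hidden_chain :: "(real \<Rightarrow> real) \<Rightarrow> (nat \<Rightarrow> real) \<Rightarrow> (nat \<Rightarrow> real) \<Rightarrow> nat \<Rightarrow> real \<Rightarrow> real" where
  "hidden_chain \<rho> a b 0 t = t"
| "hidden_chain \<rho> a b (Suc k) t = \<rho> (a (Suc k) * hidden_chain \<rho> a b k t + b (Suc k))"

lemma hidden_chain_upd_beyond:
  "k < n \<Longrightarrow> hidden_chain \<rho> (a(n := \<alpha>)) (b(n := \<beta>)) k t = hidden_chain \<rho> a b k t"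
  by (induction k) auto

lemma hidden_chain_lipschitz:
  assumes lip: "K-lipschitz_on UNIV \<rho>"
  shows "\<bar>hidden_chain \<rho> a b k t - hidden_chain \<rho> a b k t'\<bar> \<le> (\<Prod>j\<in>{1..k}. K * \<bar>a j\<bar>) * \<bar>t - t'\<bar>"
proof (induction k)
  case 0
  show ?case by simp
next
  case (Suc k)
  let ?c = "hidden_chain \<rho> a b k"
  have "\<bar>hidden_chain \<rho> a b (Suc k) t - hidden_chain \<rho> a b (Suc k) t'\<bar>
      \<le> K * \<bar>(a (Suc k) * ?c t + b (Suc k)) - (a (Suc k) * ?c t' + b (Suc k))\<bar>"
    using lipschitz_onD[OF lip UNIV_I UNIV_I, of "a (Suc k) * ?c t + b (Suc k)" "a (Suc k) * ?c t' + b (Suc k)"]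
    by (simp add: dist_real_def)
  also have "\<dots> = K * (\<bar>a (Suc k)\<bar> * \<bar>?c t - ?c t'\<bar>)"
    by (simp add: abs_mult[symmetric] right_diff_distrib)
  also have "\<dots> \<le> K * (\<bar>a (Suc k)\<bar> * ((\<Prod>j\<in>{1..k}. K * \<bar>a j\<bar>) * \<bar>t - t'\<bar>))"
    using Suc.IH lipschitz_on_nonneg[OF lip] by (intro mult_left_mono) auto
  also have "\<dots> = (\<Prod>j\<in>{1..Suc k}. K * \<bar>a j\<bar>) * \<bar>t - t'\<bar>"
    by (simp add: prod.nat_ivl_Suc')
  finally show ?case .
qed

lemma hidden_chain_fixed_point:
  assumes "\<alpha>1 * u + \<beta>1 = r" and "\<alpha>2 * \<rho> r + \<beta>2 = r" and "0 < k"
  shows "hidden_chain \<rho> (\<lambda>j. if j = 1 then \<alpha>1 else \<alpha>2) (\<lambda>j. if j = 1 then \<beta>1 else \<beta>2) k u = \<rho> r"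
  using \<open>0 < k\<close>
proof (induction k)
  case (Suc k)
  then show ?case using assms by (cases k) auto
qed simp

lemma hidden_chain_separating:
  assumes "u \<noteq> u'" and not_affine: "\<not> (\<exists>a b. \<forall>x. \<rho> x = a * x + b)"
  obtains a b where "\<And>k. hidden_chain \<rho> a b k u \<noteq> hidden_chain \<rho> a b k u'"
proof -
  obtain r r' where "\<rho> r \<noteq> \<rho> r'"
  proof (rule ccontr)
    assume "\<not> thesis"
    then have "\<forall>x. \<rho> x = 0 * x + \<rho> 0"
      using that by auto
    with not_affine show False by blast
  qed
  obtain \<alpha>1 \<beta>1 where \<alpha>1: "\<alpha>1 * u + \<beta>1 = r" "\<alpha>1 * u' + \<beta>1 = r'"
    using affine_through_two_points[OF \<open>u \<noteq> u'\<close>] by metis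
  obtain \<alpha>2 \<beta>2 where \<alpha>2: "\<alpha>2 * \<rho> r + \<beta>2 = r" "\<alpha>2 * \<rho> r' + \<beta>2 = r'"
    using affine_through_two_points[OF \<open>\<rho> r \<noteq> \<rho> r'\<close>] by metis
  have "hidden_chain \<rho> (\<lambda>j. if j = 1 then \<alpha>1 else \<alpha>2) (\<lambda>j. if j = 1 then \<beta>1 else \<beta>2) k u
      \<noteq> hidden_chain \<rho> (\<lambda>j. if j = 1 then \<alpha>1 else \<alpha>2) (\<lambda>j. if j = 1 then \<beta>1 else \<beta>2) k u'" for k
    using hidden_chain_fixed_point[where \<rho> = \<rho>, OF \<alpha>1(1) \<alpha>2(1)]
      hidden_chain_fixed_point[where \<rho> = \<rho>, OF \<alpha>1(2) \<alpha>2(2)] \<open>\<rho> r \<noteq> \<rho> r'\<close> \<open>u \<noteq> u'\<close>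
    by (cases "k = 0") auto
  then show thesis
    by (rule that)
qed

context
  fixes S :: "nat list" and L :: nat
  assumes L: "L = length S - 1" and L_ge_2: "2 \<le> L"
    and widths_pos: "\<forall>l\<le>L. 0 < S ! l" and N1: "2 \<le> S ! 1"
begin

lemma thin_net_in_NN: "thin_net L m \<beta> h a b \<in> NN S"
proof -
  have width: "S ! l \<noteq> 0" if "l \<le> L" for l
    using widths_pos that by simp
  have "L < length S" using L L_ge_2 by linarith
  then show ?thesis
    using N1 L_ge_2 unfolding NN_def thin_net_def by (auto simp: width)
qed

lemma thin_net_layer_1:
  assumes "i \<le> 1"
  shows "layer_out \<rho> S (thin_net L m \<beta> h a b) x 1 i = \<rho> (m * x 0 + \<beta> - real i * h)"
proof -
  let ?W = "fst (thin_net L m \<beta> h a b) 1 i"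
  have "(\<Sum>j<S ! 0. ?W j * x j) = ?W 0 * x 0 + ?W 1 * x 1"
    using widths_pos by (intro sum_lessThan_supported_01) (auto simp: thin_net_def)
  moreover have "1 < length S - 1" "i < S ! 1"
    using L L_ge_2 N1 assms by auto
  ultimately show ?thesis
    using assms by (simp add: thin_net_def Let_def algebra_simps)
qed

lemma thin_net_layer_step:
  assumes "2 \<le> l" and "l \<le> L"
  shows "layer_out \<rho> S (thin_net L m \<beta> h a b) x l 0 =
    (let z = a (l - 1) * (if l = 2 then layer_out \<rho> S (thin_net L m \<beta> h a b) x 1 0 - layer_out \<rho> S (thin_net L m \<beta> h a b) x 1 1
                          else layer_out \<rho> S (thin_net L m \<beta> h a b) x (l - 1) 0) + b (l - 1)
     in if l < L then \<rho> z else z)"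
proof -
  obtain k where l: "l = Suc k" and "1 \<le> k"
    using assms by (cases l) auto
  let ?W = "fst (thin_net L m \<beta> h a b) l 0"
  let ?v = "layer_out \<rho> S (thin_net L m \<beta> h a b) x k"
  have "(\<Sum>j<S ! k. ?W j * ?v j) = ?W 0 * ?v 0 + ?W 1 * ?v 1"
    using widths_pos assms l N1 by (intro sum_lessThan_supported_01) (auto simp: thin_net_def)
  moreover have "?W 0 = a k" "?W 1 = (if k = 1 then - a 1 else 0)"
    "snd (thin_net L m \<beta> h a b) l 0 = b k"
    using assms l by (auto simp: thin_net_def)
  moreover have "0 < S ! l"
    using widths_pos assms by auto
  then have "layer_out \<rho> S (thin_net L m \<beta> h a b) x l 0 =
      (let z = (\<Sum>j<S ! k. ?W j * ?v j) + snd (thin_net L m \<beta> h a b) l 0 in if l < L then \<rho> z else z)"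
    unfolding l L by (subst layer_out.simps) simp
  ultimately show ?thesis
    using l by (cases "k = 1") (simp_all add: Let_def algebra_simps del: layer_out.simps)
qed

lemma thin_net_hidden_layer:
  assumes "0 < k" and "Suc k < L"
  shows "layer_out \<rho> S (thin_net L m \<beta> h a b) x (Suc k) 0
           = hidden_chain \<rho> a b k (\<rho> (m * x 0 + \<beta>) - \<rho> (m * x 0 + \<beta> - h))"
  using assms
proof (induction k)
  case 0
  then show ?case by simp
next
  case (Suc k)
  show ?case
  proof (cases "k = 0")
    case True
    then show ?thesis
      using Suc.prems thin_net_layer_step[of "Suc (Suc 0)"] thin_net_layer_1[of 0] thin_net_layer_1[of 1]
      by (simp add: Let_def del: layer_out.simps)
  next
    case False
    then show ?thesis
      using Suc thin_net_layer_step[of "Suc (Suc k)"] by (simp add: Let_def del: layer_out.simps)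
  qed
qed

lemma thin_net_output:
  "layer_out \<rho> S (thin_net L m \<beta> h a b) x L 0
     = a (L - 1) * hidden_chain \<rho> a b (L - 2) (\<rho> (m * x 0 + \<beta>) - \<rho> (m * x 0 + \<beta> - h)) + b (L - 1)"
proof (cases "L = 2")
  case True
  then show ?thesis
    using thin_net_layer_step[of L] thin_net_layer_1[of 0] thin_net_layer_1[of 1]
    by (simp add: Let_def del: layer_out.simps)
next
  case False
  then have "0 < L - 2" "Suc (L - 2) < L" "L - 1 = Suc (L - 2)"
    using L_ge_2 by auto
  then show ?thesis
    using False L_ge_2 thin_net_layer_step[of L] thin_net_hidden_layer[of "L - 2"]
    by (simp add: Let_def del: layer_out.simps)
qed

lemma thin_net_output_centered:
  "layer_out \<rho> S (thin_net L m \<beta> h (a(L - 1 := \<epsilon>)) (b(L - 1 := - \<epsilon> * hidden_chain \<rho> a b (L - 2) v))) x L 0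
     = \<epsilon> * (hidden_chain \<rho> a b (L - 2) (\<rho> (m * x 0 + \<beta>) - \<rho> (m * x 0 + \<beta> - h)) - hidden_chain \<rho> a b (L - 2) v)"
  using thin_net_output hidden_chain_upd_beyond[of "L - 2" "L - 1"] L_ge_2
  by (simp add: algebra_simps)

lemma thin_nets_separating:
  assumes lip: "K-lipschitz_on UNIV \<rho>" and not_affine: "\<not> (\<exists>a b. \<forall>x. \<rho> x = a * x + b)"
  obtains c B s s' where "c \<noteq> 0" and "0 \<le> B" and
    "\<And>\<epsilon> m \<beta>. \<exists>\<Phi>\<in>NN S. (\<forall>x. \<bar>layer_out \<rho> S \<Phi> x L 0\<bar> \<le> \<bar>\<epsilon>\<bar> * B) \<and>
       (\<forall>x y. m * x 0 + \<beta> = s \<longrightarrow> m * y 0 + \<beta> = s' \<longrightarrow>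
          layer_out \<rho> S \<Phi> x L 0 - layer_out \<rho> S \<Phi> y L 0 = \<epsilon> * c)"
proof -
  \<comment> \<open>The increment \<open>D\<close> takes different values at \<open>s\<close> and \<open>s'\<close>, and the hidden layers keep them
    apart.  Subtracting the value at \<open>s\<close> in the output layer makes the realization \<open>\<epsilon>\<close> times a
    bounded function whose values on \<open>m * x 0 + \<beta> = s\<close> and \<open>m * x 0 + \<beta> = s'\<close> differ by \<open>\<epsilon> * c\<close>.\<close>
  obtain h s s' where "\<rho> s - \<rho> (s - h) \<noteq> \<rho> s' - \<rho> (s' - h)"
    using lipschitz_non_affine_increments[OF lip not_affine] by blast
  define D where "D t = \<rho> t - \<rho> (t - h)" for t
  have "D s \<noteq> D s'"
    unfolding D_def by fact
  obtain a b where separating: "\<And>k. hidden_chain \<rho> a b k (D s) \<noteq> hidden_chain \<rho> a b k (D s')"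
    by (rule hidden_chain_separating[OF \<open>D s \<noteq> D s'\<close> not_affine]) (rule that)
  define chain where "chain = hidden_chain \<rho> a b (L - 2)"
  define P where "P = (\<Prod>j\<in>{1..L - 2}. K * \<bar>a j\<bar>)"
  have "0 \<le> K"
    using lip by (rule lipschitz_on_nonneg)
  then have "0 \<le> P"
    unfolding P_def by (simp add: prod_nonneg)
  have D_bound: "\<bar>D t\<bar> \<le> K * \<bar>h\<bar>" for t
    using lipschitz_onD[OF lip UNIV_I UNIV_I, of t "t - h"] by (simp add: D_def dist_real_def)
  have "\<bar>D t - D s\<bar> \<le> 2 * K * \<bar>h\<bar>" for t
    using D_bound[of t] D_bound[of s] abs_triangle_ineq4[of "D t" "D s"] by linarith
  then have chain_bound: "\<bar>chain (D t) - chain (D s)\<bar> \<le> P * (2 * K * \<bar>h\<bar>)" for t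
    using hidden_chain_lipschitz[OF lip, of a b "L - 2" "D t" "D s"] \<open>0 \<le> P\<close>
    unfolding chain_def P_def by (meson mult_left_mono order_trans)
  show ?thesis
  proof (rule that)
    show "chain (D s) - chain (D s') \<noteq> 0"
      using separating by (simp add: chain_def)
    show "0 \<le> P * (2 * K * \<bar>h\<bar>)"
      using \<open>0 \<le> P\<close> \<open>0 \<le> K\<close> by simp
    fix \<epsilon> m \<beta>
    define \<Phi> where "\<Phi> = thin_net L m \<beta> h (a(L - 1 := \<epsilon>)) (b(L - 1 := - \<epsilon> * chain (D s)))"
    have out: "layer_out \<rho> S \<Phi> x L 0 = \<epsilon> * (chain (D (m * x 0 + \<beta>)) - chain (D s))" for x
      unfolding \<Phi>_def chain_def D_def by (rule thin_net_output_centered)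
    have "\<Phi> \<in> NN S"
      unfolding \<Phi>_def by (rule thin_net_in_NN)
    moreover have "\<bar>layer_out \<rho> S \<Phi> x L 0\<bar> \<le> \<bar>\<epsilon>\<bar> * (P * (2 * K * \<bar>h\<bar>))" for x
      unfolding out abs_mult using chain_bound by (intro mult_left_mono) auto
    moreover have "layer_out \<rho> S \<Phi> x L 0 - layer_out \<rho> S \<Phi> y L 0 = \<epsilon> * (chain (D s) - chain (D s'))"
      if "m * x 0 + \<beta> = s" and "m * y 0 + \<beta> = s'" for x y
      unfolding out that by (simp add: algebra_simps)
    ultimately show "\<exists>\<Phi>\<in>NN S. (\<forall>x. \<bar>layer_out \<rho> S \<Phi> x L 0\<bar> \<le> \<bar>\<epsilon>\<bar> * (P * (2 * K * \<bar>h\<bar>))) \<and>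
       (\<forall>x y. m * x 0 + \<beta> = s \<longrightarrow> m * y 0 + \<beta> = s' \<longrightarrow>
          layer_out \<rho> S \<Phi> x L 0 - layer_out \<rho> S \<Phi> y L 0 = \<epsilon> * (chain (D s) - chain (D s')))"
      by blast
  qed
qed

end

lemma exists_large_scale:
  fixes A r E M :: real
  assumes "0 \<le> A" and "0 < r" and "0 < E"
  obtains m where "0 < m" and "A / m < r" and "M * (A / m) < E"
proof -
  define m where "m = 1 + A / r + \<bar>M\<bar> * A / E"
  have "0 \<le> A / r" "0 \<le> \<bar>M\<bar> * A / E"
    using assms by simp_all
  then have "0 < m" "A / r < m" "\<bar>M\<bar> * A / E < m"
    by (simp_all add: m_def)
  then have "A / m < r" "M * (A / m) < E"
    using assms abs_ge_self[of M] mult_right_mono[of M "\<bar>M\<bar>" A]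
    by (auto simp: field_simps)
  with \<open>0 < m\<close> show thesis
    by (rule that)
qed

lemma shifted_point_in_ball:
  assumes "0 < d" and "x0 \<in> Rd d" and ball: "{x \<in> Rd d. eucl_dist d x x0 < r} \<subseteq> \<Omega>" and "\<bar>t\<bar> < r"
  shows "x0(0 := x0 0 + t) \<in> \<Omega>"
proof -
  have "x0(0 := x0 0 + t) \<in> Rd d"
    using assms by (auto simp: Rd_def)
  moreover have "eucl_dist d (x0(0 := x0 0 + t)) x0 < r"
    using eucl_dist_update_0[OF \<open>0 < d\<close>, of x0 t] eucl_dist_commute \<open>\<bar>t\<bar> < r\<close> by metis
  ultimately show ?thesis
    using ball by blast
qed

lemma realization_small_and_steep:
  assumes lip: "K-lipschitz_on UNIV \<rho>" and not_affine: "\<not> (\<exists>a b. \<forall>x. \<rho> x = a * x + b)"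
    and len: "3 \<le> length S" and widths_pos: "\<forall>l<length S. 0 < S ! l"
    and N0: "S ! 0 = d" and N1: "2 \<le> S ! 1"
    and ball: "x0 \<in> Rd d" "0 < r" "{x \<in> Rd d. eucl_dist d x x0 < r} \<subseteq> \<Omega>"
    and "0 < e"
  shows "\<exists>\<Phi>\<in>NN S. (\<forall>x\<in>\<Omega>. \<bar>realization \<rho> S \<Omega> \<Phi> x\<bar> < e)
                 \<and> \<not> bounded_slope \<Omega> (eucl_dist d) M (realization \<rho> S \<Omega> \<Phi>)"
proof -
  define L where "L = length S - 1"
  have "2 \<le> L" and widths: "\<forall>l\<le>L. 0 < S ! l"
    using len widths_pos by (auto simp: L_def)
  then have "0 < d"
    using N0 by auto
  obtain c B s s' where "c \<noteq> 0" and "0 \<le> B" and family: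
    "\<And>\<epsilon> m \<beta>. \<exists>\<Phi>\<in>NN S. (\<forall>x. \<bar>layer_out \<rho> S \<Phi> x L 0\<bar> \<le> \<bar>\<epsilon>\<bar> * B) \<and>
       (\<forall>x y. m * x 0 + \<beta> = s \<longrightarrow> m * y 0 + \<beta> = s' \<longrightarrow>
          layer_out \<rho> S \<Phi> x L 0 - layer_out \<rho> S \<Phi> y L 0 = \<epsilon> * c)"
    by (rule thin_nets_separating[OF L_def \<open>2 \<le> L\<close> widths N1 lip not_affine]) (rule that)
  define \<epsilon> where "\<epsilon> = e / (B + 1)"
  have "0 < \<epsilon>" "\<epsilon> * B < e"
    using \<open>0 < e\<close> \<open>0 \<le> B\<close> by (auto simp: \<epsilon>_def field_simps)
  \<comment> \<open>The jump \<open>\<epsilon> * c\<close> stays fixed while a steeper ridge \<open>m * x 0 + \<beta>\<close> brings the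
    points where it occurs arbitrarily close together.\<close>
  obtain m where "0 < m" and "\<bar>s' - s\<bar> / m < r" and "M * (\<bar>s' - s\<bar> / m) < \<epsilon> * \<bar>c\<bar>"
    using exists_large_scale[of "\<bar>s' - s\<bar>" r "\<epsilon> * \<bar>c\<bar>"] \<open>0 < r\<close> \<open>0 < \<epsilon>\<close> \<open>c \<noteq> 0\<close> by auto
  define y where "y = x0(0 := x0 0 + (s' - s) / m)"
  obtain \<Phi> where "\<Phi> \<in> NN S" and small: "\<forall>x. \<bar>layer_out \<rho> S \<Phi> x L 0\<bar> \<le> \<bar>\<epsilon>\<bar> * B"
    and jump: "\<forall>x y. m * x 0 + (s - m * x0 0) = s \<longrightarrow> m * y 0 + (s - m * x0 0) = s' \<longrightarrow>
                  layer_out \<rho> S \<Phi> x L 0 - layer_out \<rho> S \<Phi> y L 0 = \<epsilon> * c"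
    using family by blast
  have "x0 \<in> \<Omega>" "y \<in> \<Omega>"
    using shifted_point_in_ball[OF \<open>0 < d\<close> ball(1,3), of 0] shifted_point_in_ball[OF \<open>0 < d\<close> ball(1,3)]
      \<open>0 < r\<close> \<open>\<bar>s' - s\<bar> / m < r\<close> \<open>0 < m\<close> by (auto simp: y_def)
  moreover have "layer_out \<rho> S \<Phi> x0 L 0 - layer_out \<rho> S \<Phi> y L 0 = \<epsilon> * c"
    using jump \<open>0 < m\<close> by (simp add: y_def field_simps)
  moreover have "eucl_dist d x0 y = \<bar>s' - s\<bar> / m"
    using eucl_dist_update_0[OF \<open>0 < d\<close>] \<open>0 < m\<close> by (simp add: y_def)
  ultimately have "M * eucl_dist d x0 y < \<bar>realization \<rho> S \<Omega> \<Phi> x0 - realization \<rho> S \<Omega> \<Phi> y\<bar>"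
    using \<open>M * (\<bar>s' - s\<bar> / m) < \<epsilon> * \<bar>c\<bar>\<close> \<open>0 < \<epsilon>\<close>
    by (simp add: realization_eq_layer_out abs_mult L_def)
  with \<open>x0 \<in> \<Omega>\<close> \<open>y \<in> \<Omega>\<close> have "\<not> bounded_slope \<Omega> (eucl_dist d) M (realization \<rho> S \<Omega> \<Phi>)"
    unfolding bounded_slope_def by (meson not_le)
  moreover have "\<bar>realization \<rho> S \<Omega> \<Phi> x\<bar> < e" if "x \<in> \<Omega>" for x
    using small[rule_format, of x] \<open>0 < \<epsilon>\<close> \<open>\<epsilon> * B < e\<close> that
    by (simp add: realization_eq_layer_out L_def)
  ultimately show ?thesis
    using \<open>\<Phi> \<in> NN S\<close> by blast
qed

theorem corollary4p3:
  fixes \<rho> :: "real \<Rightarrow> real" and S :: "nat list" and d :: nat and \<Omega> :: "(nat \<Rightarrow> real) set"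
  assumes lip: "\<exists>K. K-lipschitz_on UNIV \<rho>"
    and not_affine: "\<not> (\<exists>a b. \<forall>x. \<rho> x = a * x + b)"
    and L_ge2: "length S \<ge> 3"
    and pos: "\<forall>l<length S. 0 < S ! l"
    and N0: "S ! 0 = d"
    and N1: "S ! 1 \<ge> 3"
    and NL: "S ! (length S - 1) = 1"
    and sub: "\<Omega> \<subseteq> Rd d"
    and bdd: "\<exists>C. \<forall>x\<in>\<Omega>. eucl_dist d x (\<lambda>_. 0) \<le> C"
    and int: "\<exists>x0\<in>Rd d. \<exists>r>0. {x\<in>Rd d. eucl_dist d x x0 < r} \<subseteq> \<Omega>"
  shows "\<not> quotient_map (top_of_set (NN S))
                        (unif_top \<Omega> (realization \<rho> S \<Omega> ` NN S))
                        (realization \<rho> S \<Omega>)"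
proof (rule not_quotient_map_if_steep_approximation[where \<delta> = "eucl_dist d" and \<Phi>\<^sub>0 = "(\<lambda>_ _ _. 0, \<lambda>_ _. 0)"])
  obtain K where K: "K-lipschitz_on UNIV \<rho>"
    using lip by blast
  obtain x0 r where ball: "x0 \<in> Rd d" "0 < r" "{x \<in> Rd d. eucl_dist d x x0 < r} \<subseteq> \<Omega>"
    using int by blast
  show "continuous_on (NN S) (\<lambda>\<Phi>. realization \<rho> S \<Omega> \<Phi> x)" for x
    using lipschitz_on_continuous_on[OF K] by (rule realization_continuous_on_params)
  show "\<exists>T M. open T \<and> \<Phi> \<in> T \<and> (\<forall>\<Psi>\<in>NN S \<inter> T. bounded_slope \<Omega> (eucl_dist d) M (realization \<rho> S \<Omega> \<Psi>))" for \<Phi>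
    using pos L_ge2 by (intro realization_locally_bounded_slope[OF K N0]) auto
  show "0 \<le> eucl_dist d x y" for x y
    by (rule eucl_dist_nonneg)
  show "(\<lambda>_ _ _. 0, \<lambda>_ _. 0) \<in> NN S"
    by (rule zero_params_in_NN)
  show "\<exists>\<Psi>\<in>NN S. (\<forall>x\<in>\<Omega>. \<bar>realization \<rho> S \<Omega> \<Psi> x - realization \<rho> S \<Omega> (\<lambda>_ _ _. 0, \<lambda>_ _. 0) x\<bar> < e)
            \<and> \<not> bounded_slope \<Omega> (eucl_dist d) M (realization \<rho> S \<Omega> \<Psi>)" if "0 < e" for e M
    using realization_small_and_steep[OF K not_affine L_ge2 pos N0 _ ball \<open>0 < e\<close>] N1 L_ge2
    by (simp add: realization_zero_params)
qed

end
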